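(* Let $(\mathfrak g,[\cdot,\cdot]_{\mathfrak g})$ be a finite-dimensional Lie algebra and suppose its dual space $\mathfrak g^*$ carries a Lie bracket $[\cdot,\cdot]_{\mathfrak g^*}$. Let $E:\mathfrak g\to\mathfrak g$ be linear with dual map $E^*:\mathfrak g^*\to\mathfrak g^*$, and assume that $(\mathfrak g,[\cdot,\cdot]_{\mathfrak g},E)$ and $(\mathfrak g^*,[\cdot,\cdot]_{\mathfrak g^*},E^* )$ are ENL algebras. Then the following are equivalent: (i) $((\mathfrak g,E),(\mathfrak g^*,E^* );\mathrm{ad}^*,\mathfrak{ad}^* )$ is a matched pair of ENL algebras, where $\mathrm{ad}^*$ is the coadjoint action of $\mathfrak g$ on $\mathfrak g^*$ and $\mathfrak{ad}^*$ is the coadjoint action of $\mathfrak g^*$ on $\mathfrak g$; (ii) $((\mathfrak g\oplus\mathfrak g^*,\widehat E,S),(\mathfrak g,E),(\mathfrak g^*,E^* ))$ is a Manin triple of ENL algebras (for a Lie bracket on $\mathfrak g\oplus\mathfrak g^*$), where $\widehat E(x+\xi)=Ex+E^*\xi$ and $S(x+\xi,y+\eta)=\xi(y)+\eta(x)$ for $x,y\in\mathfrak g$, $\xi,\eta\in\mathfrak g^*$.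
   Context: All vector spaces are finite-dimensional over an algebraically closed field of characteristic zero. An ENL algebra $(\mathfrak g,[\cdot,\cdot],E)$ is a Lie algebra with a linear map $E$ satisfying $E[x,y]=[x,Ey]$ for all $x,y$ (equivalently $E\circ\mathrm{ad}_x=\mathrm{ad}_x\circ E$, equivalently $E[x,y]=[Ex,y]$). Coadjoint actions: $\langle\mathrm{ad}^*_x\xi,y\rangle=-\langle\xi,[x,y]_{\mathfrak g}\rangle$ and $\langle\mathfrak{ad}^*_\xi x,\eta\rangle=-\langle x,[\xi,\eta]_{\mathfrak g^*}\rangle$. A matched pair of Lie algebras $(\mathfrak g,\mathfrak h;\rho,\mu)$ consists of Lie algebras $\mathfrak g,\mathfrak h$ and representations $\rho:\mathfrak g\to\mathfrak{gl}(\mathfrak h)$, $\mu:\mathfrak h\to\mathfrak{gl}(\mathfrak g)$ with $\rho(x)[\xi,\eta]_{\mathfrak h}=[\rho(x)\xi,\eta]_{\mathfrak h}+[\xi,\rho(x)\eta]_{\mathfrak h}+\rho(\mu(\eta)x)\xi-\rho(\mu(\xi)x)\eta$ and $\mu(\xi)[x,y]_{\mathfrak g}=[\mu(\xi)x,y]_{\mathfrak g}+[x,\mu(\xi)y]_{\mathfrak g}+\mu(\rho(y)\xi)x-\mu(\rho(x)\xi)y$ for all $x,y\in\mathfrak g,\ \xi,\eta\in\mathfrak h$. For ENL algebras $(\mathfrak g,E)$, $(\mathfrak h,F)$, a matched pair of ENL algebras $((\mathfrak g,E),(\mathfrak h,F);\rho,\mu)$ is a matched pair of Lie algebras $(\mathfrak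 g,\mathfrak h;\rho,\mu)$ with $F(\rho(x)\xi)=\rho(Ex)\xi=\rho(x)(F\xi)$ and $E(\mu(\xi)x)=\mu(F\xi)x=\mu(\xi)(Ex)$ for all $x\in\mathfrak g,\xi\in\mathfrak h$. A quadratic ENL algebra $(\mathcal G,\mathcal E,S)$ is an ENL algebra $(\mathcal G,\mathcal E)$ with a nondegenerate symmetric bilinear form $S$ that is invariant ($S([x,y],z)+S(y,[x,z])=0$) and satisfies $S(\mathcal Ex,y)=S(x,\mathcal Ey)$. A Manin triple of ENL algebras $((\mathcal G,\mathcal E,S),(\mathfrak g,E),(\mathfrak h,F))$ consists of a quadratic ENL algebra $(\mathcal G,\mathcal E,S)$ and ENL algebras $(\mathfrak g,E),(\mathfrak h,F)$ such that $\mathfrak g,\mathfrak h$ are Lie subalgebras of $\mathcal G$ with $\mathcal E|_{\mathfrak g}=E$, $\mathcal E|_{\mathfrak h}=F$, $\mathcal G=\mathfrak g\oplus\mathfrak h$ as vector spaces, and $S(\mathfrak g,\mathfrak g)=0=S(\mathfrak h,\mathfrak h)$. *)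

theory Defs
  imports "HOL-Computational_Algebra.Polynomial" "HOL-Library.Function_Algebras" "HOL-Library.Product_Plus"
begin

text \<open>A finite-dimensional vector space with a chosen
basis indexed by a finite type 'n is modelled as 'n => 'k (coordinate vectors), and its
dual is modelled as 'n => 'k via the pairing below. Abstract vector spaces are carriers
of type 'v (ab_group_add) with an explicit scalar multiplication sc.\<close>

definition alg_closed :: "'k::field itself \<Rightarrow> bool" where
  "alg_closed _ \<longleftrightarrow> (\<forall>p :: 'k poly. degree p \<ge> 1 \<longrightarrow> (\<exists>x. poly p x = 0))"

definition fsc :: "'k::field \<Rightarrow> ('n \<Rightarrow> 'k) \<Rightarrow> ('n \<Rightarrow> 'k)" where
  "fsc c x = (\<lambda>i. c * x i)"

definition psc :: "'k::field \<Rightarrow> ('n \<Rightarrow> 'k) \<times> ('n \<Rightarrow> 'k) \<Rightarrow> ('n \<Rightarrow> 'k) \<times> ('n \<Rightarrow> 'k)" where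
  "psc c p = (fsc c (fst p), fsc c (snd p))"

definition pairing :: "('n::finite \<Rightarrow> 'k::field) \<Rightarrow> ('n \<Rightarrow> 'k) \<Rightarrow> 'k" where
  "pairing xi x = (\<Sum>i\<in>UNIV. xi i * x i)"

definition basisv :: "'n \<Rightarrow> ('n \<Rightarrow> 'k::field)" where
  "basisv i = (\<lambda>j. if j = i then 1 else 0)"

text \<open>dual map: pairing (dual_map E xi) x = pairing xi (E x)\<close>
definition dual_map :: "(('n::finite \<Rightarrow> 'k::field) \<Rightarrow> ('n \<Rightarrow> 'k)) \<Rightarrow> ('n \<Rightarrow> 'k) \<Rightarrow> ('n \<Rightarrow> 'k)" where
  "dual_map E xi = (\<lambda>i. pairing xi (E (basisv i)))"

text \<open>coadjoint action: pairing (coad br a b) c = - pairing b (br a c)\<close>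
definition coad :: "(('n::finite \<Rightarrow> 'k::field) \<Rightarrow> ('n \<Rightarrow> 'k) \<Rightarrow> ('n \<Rightarrow> 'k))
    \<Rightarrow> ('n \<Rightarrow> 'k) \<Rightarrow> ('n \<Rightarrow> 'k) \<Rightarrow> ('n \<Rightarrow> 'k)" where
  "coad br a b = (\<lambda>i. - pairing b (br a (basisv i)))"

definition lin :: "('k \<Rightarrow> 'v::ab_group_add \<Rightarrow> 'v) \<Rightarrow> ('k \<Rightarrow> 'w::ab_group_add \<Rightarrow> 'w)
    \<Rightarrow> ('v \<Rightarrow> 'w) \<Rightarrow> bool" where
  "lin sc1 sc2 f \<longleftrightarrow> (\<forall>x y. f (x + y) = f x + f y) \<and> (\<forall>c x. f (sc1 c x) = sc2 c (f x))"

definition bilin :: "('k \<Rightarrow> 'v::ab_group_add \<Rightarrow> 'v) \<Rightarrow> ('k \<Rightarrow> 'w::ab_group_add \<Rightarrow> 'w)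
    \<Rightarrow> ('v \<Rightarrow> 'v \<Rightarrow> 'w) \<Rightarrow> bool" where
  "bilin sc1 sc2 b \<longleftrightarrow> (\<forall>x. lin sc1 sc2 (b x)) \<and> (\<forall>y. lin sc1 sc2 (\<lambda>x. b x y))"

definition lie_algebra :: "('k \<Rightarrow> 'v::ab_group_add \<Rightarrow> 'v) \<Rightarrow> ('v \<Rightarrow> 'v \<Rightarrow> 'v) \<Rightarrow> bool" where
  "lie_algebra sc br \<longleftrightarrow> bilin sc sc br \<and> (\<forall>x. br x x = 0) \<and>
     (\<forall>x y z. br x (br y z) + br y (br z x) + br z (br x y) = 0)"

definition enl_algebra :: "('k \<Rightarrow> 'v::ab_group_add \<Rightarrow> 'v) \<Rightarrow> ('v \<Rightarrow> 'v \<Rightarrow> 'v) \<Rightarrow> ('v \<Rightarrow> 'v) \<Rightarrow> bool" where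
  "enl_algebra sc br E \<longleftrightarrow> lie_algebra sc br \<and> lin sc sc E \<and> (\<forall>x y. E (br x y) = br x (E y))"

definition representation :: "('k \<Rightarrow> 'v::ab_group_add \<Rightarrow> 'v) \<Rightarrow> ('v \<Rightarrow> 'v \<Rightarrow> 'v)
    \<Rightarrow> ('k \<Rightarrow> 'w::ab_group_add \<Rightarrow> 'w) \<Rightarrow> ('v \<Rightarrow> 'w \<Rightarrow> 'w) \<Rightarrow> bool" where
  "representation scg brg sch rho \<longleftrightarrow> lin scg (\<lambda>c f. \<lambda>v. sch c (f v)) rho \<and> (\<forall>x. lin sch sch (rho x)) \<and>
     (\<forall>x y v. rho (brg x y) v = rho x (rho y v) - rho y (rho x v))"

definition matched_pair :: "('k \<Rightarrow> 'v::ab_group_add \<Rightarrow> 'v) \<Rightarrow> ('v \<Rightarrow> 'v \<Rightarrow> 'v)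
    \<Rightarrow> ('k \<Rightarrow> 'w::ab_group_add \<Rightarrow> 'w) \<Rightarrow> ('w \<Rightarrow> 'w \<Rightarrow> 'w)
    \<Rightarrow> ('v \<Rightarrow> 'w \<Rightarrow> 'w) \<Rightarrow> ('w \<Rightarrow> 'v \<Rightarrow> 'v) \<Rightarrow> bool" where
  "matched_pair scg brg sch brh rho mu \<longleftrightarrow>
     lie_algebra scg brg \<and> lie_algebra sch brh \<and>
     representation scg brg sch rho \<and> representation sch brh scg mu \<and>
     (\<forall>x xi eta. rho x (brh xi eta) = brh (rho x xi) eta + brh xi (rho x eta)
                   + rho (mu eta x) xi - rho (mu xi x) eta) \<and>
     (\<forall>xi x y. mu xi (brg x y) = brg (mu xi x) y + brg x (mu xi y)
                   + mu (rho y xi) x - mu (rho x xi) y)"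

definition matched_pair_enl :: "('k \<Rightarrow> 'v::ab_group_add \<Rightarrow> 'v) \<Rightarrow> ('v \<Rightarrow> 'v \<Rightarrow> 'v) \<Rightarrow> ('v \<Rightarrow> 'v)
    \<Rightarrow> ('k \<Rightarrow> 'w::ab_group_add \<Rightarrow> 'w) \<Rightarrow> ('w \<Rightarrow> 'w \<Rightarrow> 'w) \<Rightarrow> ('w \<Rightarrow> 'w)
    \<Rightarrow> ('v \<Rightarrow> 'w \<Rightarrow> 'w) \<Rightarrow> ('w \<Rightarrow> 'v \<Rightarrow> 'v) \<Rightarrow> bool" where
  "matched_pair_enl scg brg E sch brh F rho mu \<longleftrightarrow>
     enl_algebra scg brg E \<and> enl_algebra sch brh F \<and>
     matched_pair scg brg sch brh rho mu \<and>
     (\<forall>x xi. F (rho x xi) = rho (E x) xi \<and> rho (E x) xi = rho x (F xi)) \<and>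
     (\<forall>x xi. E (mu xi x) = mu (F xi) x \<and> mu (F xi) x = mu xi (E x))"

definition quadratic_enl :: "('k \<Rightarrow> 'u::ab_group_add \<Rightarrow> 'u) \<Rightarrow> ('u \<Rightarrow> 'u \<Rightarrow> 'u) \<Rightarrow> ('u \<Rightarrow> 'u)
    \<Rightarrow> ('u \<Rightarrow> 'u \<Rightarrow> 'k::field) \<Rightarrow> bool" where
  "quadratic_enl sc br E S \<longleftrightarrow> enl_algebra sc br E \<and> bilin sc (\<lambda>c a. c * a) S \<and>
     (\<forall>x y. S x y = S y x) \<and> (\<forall>x. (\<forall>y. S x y = 0) \<longrightarrow> x = 0) \<and>
     (\<forall>x y z. S (br x y) z + S y (br x z) = 0) \<and> (\<forall>x y. S (E x) y = S x (E y))"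

text \<open>Manin triple of ENL algebras; the subalgebras g, h of G are given as images of
injective linear embeddings i, j (g and h carry their own brackets and operators).\<close>
definition manin_triple_enl :: "('k \<Rightarrow> 'u::ab_group_add \<Rightarrow> 'u) \<Rightarrow> ('u \<Rightarrow> 'u \<Rightarrow> 'u) \<Rightarrow> ('u \<Rightarrow> 'u)
    \<Rightarrow> ('u \<Rightarrow> 'u \<Rightarrow> 'k::field)
    \<Rightarrow> ('k \<Rightarrow> 'v::ab_group_add \<Rightarrow> 'v) \<Rightarrow> ('v \<Rightarrow> 'v \<Rightarrow> 'v) \<Rightarrow> ('v \<Rightarrow> 'v)
    \<Rightarrow> ('k \<Rightarrow> 'w::ab_group_add \<Rightarrow> 'w) \<Rightarrow> ('w \<Rightarrow> 'w \<Rightarrow> 'w) \<Rightarrow> ('w \<Rightarrow> 'w)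
    \<Rightarrow> ('v \<Rightarrow> 'u) \<Rightarrow> ('w \<Rightarrow> 'u) \<Rightarrow> bool" where
  "manin_triple_enl scG brG EG S scg brg E sch brh F i j \<longleftrightarrow>
     quadratic_enl scG brG EG S \<and> enl_algebra scg brg E \<and> enl_algebra sch brh F \<and>
     lin scg scG i \<and> inj i \<and> lin sch scG j \<and> inj j \<and>
     (\<forall>x y. brG (i x) (i y) = i (brg x y)) \<and> (\<forall>xi eta. brG (j xi) (j eta) = j (brh xi eta)) \<and>
     (\<forall>x. EG (i x) = i (E x)) \<and> (\<forall>xi. EG (j xi) = j (F xi)) \<and>
     (\<forall>z. \<exists>!p. z = i (fst p) + j (snd p)) \<and>
     (\<forall>x y. S (i x) (i y) = 0) \<and> (\<forall>xi eta. S (j xi) (j eta) = 0)"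

definition Ehat :: "(('n::finite \<Rightarrow> 'k::field) \<Rightarrow> ('n \<Rightarrow> 'k))
    \<Rightarrow> ('n \<Rightarrow> 'k) \<times> ('n \<Rightarrow> 'k) \<Rightarrow> ('n \<Rightarrow> 'k) \<times> ('n \<Rightarrow> 'k)" where
  "Ehat E p = (E (fst p), dual_map E (snd p))"

definition Spair :: "('n::finite \<Rightarrow> 'k::field) \<times> ('n \<Rightarrow> 'k) \<Rightarrow> ('n \<Rightarrow> 'k) \<times> ('n \<Rightarrow> 'k) \<Rightarrow> 'k" where
  "Spair p q = pairing (snd p) (fst q) + pairing (snd q) (fst p)"

end

theory Submission
  imports Defs
begin

text \<open>Invariance of S leaves exactly one candidate bracket on g + g^* extending the brackets of
  g and g^*: the double bracket, whose mixed part is [x, xi] = ad^*_x xi - ad^*_xi x. By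
  bilinearity its Jacobi identity reduces to triples of elements of g or g^*; on triples
  with two entries in g (resp. in g^*) it is precisely the second (resp. first)
  compatibility condition of the matched pair (coad brg, coad brd), while the remaining
  components are the Jacobi identities of g and g^* and the fact that coadjoint actions are
  representations. Hence a Manin triple exists iff the double bracket is a Lie bracket iff
  the coadjoint actions form a matched pair. The ENL conditions cost nothing: for ENL
  algebras (g, E) and (g^*, E^*) the coadjoint actions automatically intertwine E and E^*,
  and E + E^* commutes with the double bracket.\<close>

lemma lin_additive: "lin sc1 sc2 f \<Longrightarrow> additive f"
  unfolding lin_def by (simp add: additive.intro)

lemma lin_scale: "lin sc1 sc2 f \<Longrightarrow> f (sc1 c x) = sc2 c (f x)"
  unfolding lin_def by blast

lemmas lin_add = additive.add[OF lin_additive]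
lemmas lin_zero = additive.zero[OF lin_additive]
lemmas lin_minus = additive.minus[OF lin_additive]
lemmas lin_diff = additive.diff[OF lin_additive]
lemmas lin_sum = additive.sum[OF lin_additive]

lemma bilin_lin_left: "bilin sc1 sc2 b \<Longrightarrow> lin sc1 sc2 (\<lambda>x. b x y)"
  unfolding bilin_def by blast

lemma bilin_lin_right: "bilin sc1 sc2 b \<Longrightarrow> lin sc1 sc2 (b x)"
  unfolding bilin_def by blast

lemma bilin_add_left: "bilin sc1 sc2 b \<Longrightarrow> b (x + y) z = b x z + b y z"
  unfolding bilin_def lin_def by blast

lemma bilin_add_right: "bilin sc1 sc2 b \<Longrightarrow> b x (y + z) = b x y + b x z"
  unfolding bilin_def lin_def by blast

lemma lie_algebra_antisym:
  assumes "lie_algebra sc br"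
  shows "br x y = - br y x"
proof -
  have bilin: "bilin sc sc br" and alt: "br u u = 0" for u
    using assms unfolding lie_algebra_def by blast+
  have "0 = br (x + y) (x + y)" by (simp add: alt)
  also have "\<dots> = br x y + br y x"
    by (simp only: bilin_add_left[OF bilin] bilin_add_right[OF bilin]) (simp add: alt)
  finally have "br x y + br y x = 0" by simp
  then show ?thesis by (simp add: eq_neg_iff_add_eq_0)
qed

lemma enl_algebra_commute_left:
  assumes "enl_algebra sc br E"
  shows "E (br x y) = br (E x) y"
proof -
  have lie: "lie_algebra sc br" and lin: "lin sc sc E" and comm: "E (br u v) = br u (E v)" for u v
    using assms unfolding enl_algebra_def by blast+
  have "E (br x y) = - E (br y x)"
    by (simp add: lie_algebra_antisym[OF lie, of x y] lin_minus[OF lin])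
  also have "\<dots> = br (E x) y"
    by (simp add: comm lie_algebra_antisym[OF lie, of "E x" y])
  finally show ?thesis .
qed

definition jacobiator :: "('a \<Rightarrow> 'a \<Rightarrow> 'a::plus) \<Rightarrow> 'a \<Rightarrow> 'a \<Rightarrow> 'a \<Rightarrow> 'a" where
  "jacobiator br x y z = br x (br y z) + br y (br z x) + br z (br x y)"

lemma lie_algebra_iff_jacobiator:
  "lie_algebra sc br \<longleftrightarrow> bilin sc sc br \<and> (\<forall>x. br x x = 0) \<and> (\<forall>x y z. jacobiator br x y z = 0)"
  by (simp add: lie_algebra_def jacobiator_def)

lemma jacobiator_rotate: "jacobiator br x y z = jacobiator br y z (x :: 'a::ab_semigroup_add)"
  by (simp add: jacobiator_def add_ac)

lemma jacobiator_add_left: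
  fixes br :: "'a::ab_semigroup_add \<Rightarrow> 'a \<Rightarrow> 'a"
  assumes "\<And>x y z. br (x + y) z = br x z + br y z" and "\<And>x y z. br x (y + z) = br x y + br x z"
  shows "jacobiator br (x + x') y z = jacobiator br x y z + jacobiator br x' y z"
  by (simp add: jacobiator_def assms add_ac)

lemma jacobiator_eq_0_on_product:
  fixes br :: "'a::ab_group_add \<times> 'b::ab_group_add \<Rightarrow> _ \<Rightarrow> _"
  assumes add_left: "\<And>u v w. br (u + v) w = br u w + br v w"
    and add_right: "\<And>u v w. br u (v + w) = br u v + br u w"
    and ggg: "\<And>x y z. jacobiator br (x, 0) (y, 0) (z, 0) = 0"
    and ggd: "\<And>x y c. jacobiator br (x, 0) (y, 0) (0, c) = 0"
    and gdd: "\<And>x b c. jacobiator br (x, 0) (0, b) (0, c) = 0"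
    and ddd: "\<And>a b c. jacobiator br (0, a) (0, b) (0, c) = 0"
  shows "jacobiator br u v w = 0"
proof -
  note add1 = jacobiator_add_left[of br, OF add_left add_right]
  have add2: "jacobiator br u (v + v') w = jacobiator br u v w + jacobiator br u v' w" for u v v' w
    using add1[of v v' w u] by (metis jacobiator_rotate)
  have add3: "jacobiator br u v (w + w') = jacobiator br u v w + jacobiator br u v w'" for u v w w'
    using add1[of w w' u v] by (metis jacobiator_rotate)
  have gdg: "jacobiator br (x, 0) (0, b) (z, 0) = 0"
    and dgg: "jacobiator br (0, a) (y, 0) (z, 0) = 0"
    and dgd: "jacobiator br (0, a) (y, 0) (0, c) = 0"
    and ddg: "jacobiator br (0, a) (0, b) (z, 0) = 0" for a b c x y z
    using ggd gdd by (metis jacobiator_rotate)+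
  have "jacobiator br u v w = jacobiator br ((fst u, 0) + (0, snd u)) ((fst v, 0) + (0, snd v))
      ((fst w, 0) + (0, snd w))"
    by simp
  also have "\<dots> = 0"
    unfolding add1 add2 add3
    by (simp add: ggg ggd gdd ddd gdg dgg dgd ddg)
  finally show ?thesis .
qed

lemma sum_apply: "(\<Sum>a\<in>A. f a) x = (\<Sum>a\<in>A. f a x)"
  by (induction A rule: infinite_finite_induct) auto

lemma fsc_add: "fsc c (x + y) = fsc c x + fsc c y"
  by (simp add: fsc_def fun_eq_iff algebra_simps)

lemma fsc_diff: "fsc c (x - y) = fsc c x - fsc c y"
  by (simp add: fsc_def fun_eq_iff algebra_simps)

lemma fsc_basisv_expansion: "(x :: 'n::finite \<Rightarrow> 'k::field) = (\<Sum>i\<in>UNIV. fsc (x i) (basisv i))"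
proof
  fix j
  have "(\<Sum>i\<in>UNIV. fsc (x i) (basisv i)) j = (\<Sum>i\<in>UNIV. if j = i then x j else 0)"
    unfolding sum_apply fsc_def basisv_def by (rule sum.cong) auto
  then show "x j = (\<Sum>i\<in>UNIV. fsc (x i) (basisv i)) j" by simp
qed

lemma pairing_add_left: "pairing (\<xi> + \<eta>) x = pairing \<xi> x + pairing \<eta> x"
  by (simp add: pairing_def sum.distrib algebra_simps)

lemma pairing_add_right: "pairing \<xi> (x + y) = pairing \<xi> x + pairing \<xi> y"
  by (simp add: pairing_def sum.distrib algebra_simps)

lemma pairing_minus_left: "pairing (- \<xi>) x = - pairing \<xi> x"
  by (simp add: pairing_def sum_negf)

lemma pairing_minus_right: "pairing \<xi> (- x) = - pairing \<xi> x"
  by (simp add: pairing_def sum_negf)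

lemma pairing_diff_left: "pairing (\<xi> - \<eta>) x = pairing \<xi> x - pairing \<eta> x"
  by (simp add: pairing_def sum_subtractf algebra_simps)

lemma pairing_diff_right: "pairing \<xi> (x - y) = pairing \<xi> x - pairing \<xi> y"
  by (simp add: pairing_def sum_subtractf algebra_simps)

lemma pairing_zero_left: "pairing 0 x = 0"
  by (simp add: pairing_def)

lemma pairing_zero_right: "pairing \<xi> 0 = 0"
  by (simp add: pairing_def)

lemma pairing_fsc_left: "pairing (fsc c \<xi>) x = c * pairing \<xi> x"
  by (simp add: pairing_def fsc_def sum_distrib_left algebra_simps)

lemma pairing_fsc_right: "pairing \<xi> (fsc c x) = c * pairing \<xi> x"
  by (simp add: pairing_def fsc_def sum_distrib_left algebra_simps)

lemmas pairing_simps = pairing_add_left pairing_add_right pairing_minus_left pairing_minus_right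
  pairing_diff_left pairing_diff_right pairing_zero_left pairing_zero_right
  pairing_fsc_left pairing_fsc_right

lemma pairing_commute: "pairing \<xi> x = pairing x \<xi>"
  by (simp add: pairing_def mult.commute)

lemma pairing_basisv: "pairing \<xi> (basisv i) = \<xi> i"
proof -
  have "pairing \<xi> (basisv i) = (\<Sum>j\<in>UNIV. if j = i then \<xi> i else 0)"
    unfolding pairing_def basisv_def by (rule sum.cong) auto
  then show ?thesis by simp
qed

lemma pairing_eqI: "(\<And>x. pairing \<xi> x = pairing \<eta> x) \<Longrightarrow> \<xi> = \<eta>"
  by (rule ext) (metis pairing_basisv)

lemma pairing_transpose:
  assumes "lin fsc fsc f"
  shows "pairing (\<lambda>i. pairing \<xi> (f (basisv i))) x = pairing \<xi> (f x)"
proof -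
  have "pairing \<xi> (f x) = pairing \<xi> (\<Sum>i\<in>UNIV. fsc (x i) (f (basisv i)))"
    by (subst fsc_basisv_expansion[of x]) (simp add: lin_sum[OF assms] lin_scale[OF assms])
  also have "\<dots> = (\<Sum>i\<in>UNIV. x i * pairing \<xi> (f (basisv i)))"
    by (simp add: pairing_def fsc_def sum_apply sum_distrib_left algebra_simps) (rule sum.swap)
  finally show ?thesis
    by (simp add: pairing_def mult.commute)
qed

lemma dual_map_pairing: "lin fsc fsc E \<Longrightarrow> pairing (dual_map E \<xi>) x = pairing \<xi> (E x)"
  unfolding dual_map_def by (rule pairing_transpose)

section \<open>Coadjoint actions\<close>

locale bilinear_bracket =
  fixes br :: "('n::finite \<Rightarrow> 'k::field) \<Rightarrow> ('n \<Rightarrow> 'k) \<Rightarrow> ('n \<Rightarrow> 'k)"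
  assumes bilinear: "bilin fsc fsc br"
begin

lemmas add_left = lin_add[OF bilin_lin_left[OF bilinear]]
  and add_right = lin_add[OF bilin_lin_right[OF bilinear]]
  and zero_left = lin_zero[OF bilin_lin_left[OF bilinear]]
  and zero_right = lin_zero[OF bilin_lin_right[OF bilinear]]
  and minus_left = lin_minus[OF bilin_lin_left[OF bilinear]]
  and minus_right = lin_minus[OF bilin_lin_right[OF bilinear]]
  and diff_left = lin_diff[OF bilin_lin_left[OF bilinear]]
  and diff_right = lin_diff[OF bilin_lin_right[OF bilinear]]
  and fsc_left = lin_scale[OF bilin_lin_left[OF bilinear]]
  and fsc_right = lin_scale[OF bilin_lin_right[OF bilinear]]

lemma coad_pairing: "pairing (coad br x \<xi>) y = - pairing \<xi> (br x y)"
proof -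
  have "coad br x \<xi> = - (\<lambda>i. pairing \<xi> (br x (basisv i)))"
    by (simp add: coad_def fun_eq_iff)
  then show ?thesis
    by (simp add: pairing_minus_left pairing_transpose[OF bilin_lin_right[OF bilinear]])
qed

lemma pairing_coad: "pairing y (coad br x \<xi>) = - pairing \<xi> (br x y)"
  by (simp add: pairing_commute[of y] coad_pairing)

lemma lin_coad_left: "lin fsc fsc (\<lambda>x. coad br x \<xi>)"
  unfolding lin_def
  by (auto intro: pairing_eqI simp: coad_pairing pairing_simps add_left fsc_left)

lemma lin_coad_right: "lin fsc fsc (coad br x)"
  unfolding lin_def by (auto intro: pairing_eqI simp: coad_pairing pairing_simps)

lemmas coad_add_left = lin_add[OF lin_coad_left]
  and coad_add_right = lin_add[OF lin_coad_right]
  and coad_zero_left = lin_zero[OF lin_coad_left]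
  and coad_zero_right = lin_zero[OF lin_coad_right]
  and coad_minus_left = lin_minus[OF lin_coad_left]
  and coad_minus_right = lin_minus[OF lin_coad_right]
  and coad_diff_left = lin_diff[OF lin_coad_left]
  and coad_diff_right = lin_diff[OF lin_coad_right]
  and coad_fsc_left = lin_scale[OF lin_coad_left]
  and coad_fsc_right = lin_scale[OF lin_coad_right]

lemmas bracket_simps = add_left add_right zero_left zero_right minus_left minus_right
  diff_left diff_right coad_add_left coad_add_right coad_zero_left coad_zero_right
  coad_minus_left coad_minus_right coad_diff_left coad_diff_right

end

locale lie_bracket =
  fixes br :: "('n::finite \<Rightarrow> 'k::field) \<Rightarrow> ('n \<Rightarrow> 'k) \<Rightarrow> ('n \<Rightarrow> 'k)"
  assumes lie: "lie_algebra fsc br"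

sublocale lie_bracket \<subseteq> bilinear_bracket
  using lie by unfold_locales (simp add: lie_algebra_def)

context lie_bracket
begin

lemma alternating: "br x x = 0"
  using lie by (simp add: lie_algebra_def)

lemma jacobi: "jacobiator br x y z = 0"
  using lie by (simp add: lie_algebra_def jacobiator_def)

lemma antisym: "br x y = - br y x"
  by (rule lie_algebra_antisym[OF lie])

lemma coad_bracket: "coad br (br x y) \<xi> = coad br x (coad br y \<xi>) - coad br y (coad br x \<xi>)"
proof (rule pairing_eqI)
  fix z
  have "br (br x y) z = br x (br y z) - br y (br x z)"
    using jacobi[of x y z, unfolded jacobiator_def] antisym[of z "br x y"] antisym[of z x] antisym[of "br x z" y]
    by (simp add: minus_right algebra_simps)
  then show "pairing (coad br (br x y) \<xi>) z
      = pairing (coad br x (coad br y \<xi>) - coad br y (coad br x \<xi>)) z"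
    by (simp add: coad_pairing pairing_simps)
qed

lemma representation_coad: "representation fsc br fsc (coad br)"
  unfolding representation_def lin_def
  by (simp add: fun_eq_iff coad_add_left coad_add_right coad_fsc_left coad_fsc_right coad_bracket)

lemma coad_enl:
  assumes enl: "enl_algebra fsc br T"
    and adjoint: "\<And>\<xi> y. pairing (S \<xi>) y = pairing \<xi> (T y)"
  shows "S (coad br x \<xi>) = coad br (T x) \<xi>" and "coad br (T x) \<xi> = coad br x (S \<xi>)"
proof -
  have commute: "T (br x y) = br x (T y)" and commute_left: "T (br x y) = br (T x) y" for y
    using enl enl_algebra_commute_left[OF enl] unfolding enl_algebra_def by blast+
  show "S (coad br x \<xi>) = coad br (T x) \<xi>"
    by (rule pairing_eqI) (simp add: adjoint coad_pairing commute flip: commute_left)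
  show "coad br (T x) \<xi> = coad br x (S \<xi>)"
    by (rule pairing_eqI) (simp add: adjoint coad_pairing flip: commute_left)
qed

end

section \<open>The double bracket on g + g^*\<close>

definition double_bracket ::
    "(('n::finite \<Rightarrow> 'k::field) \<Rightarrow> ('n \<Rightarrow> 'k) \<Rightarrow> ('n \<Rightarrow> 'k)) \<Rightarrow> (('n \<Rightarrow> 'k) \<Rightarrow> ('n \<Rightarrow> 'k) \<Rightarrow> ('n \<Rightarrow> 'k))
      \<Rightarrow> ('n \<Rightarrow> 'k) \<times> ('n \<Rightarrow> 'k) \<Rightarrow> ('n \<Rightarrow> 'k) \<times> ('n \<Rightarrow> 'k) \<Rightarrow> ('n \<Rightarrow> 'k) \<times> ('n \<Rightarrow> 'k)" where
  "double_bracket brg brd u v =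
    (brg (fst u) (fst v) + coad brd (snd u) (fst v) - coad brd (snd v) (fst u),
     brd (snd u) (snd v) + coad brg (fst u) (snd v) - coad brg (fst v) (snd u))"

locale lie_pair = g: lie_bracket brg + d: lie_bracket brd
  for brg brd :: "('n::finite \<Rightarrow> 'k::field) \<Rightarrow> ('n \<Rightarrow> 'k) \<Rightarrow> ('n \<Rightarrow> 'k)"
begin

lemma bilin_double_bracket: "bilin psc psc (double_bracket brg brd)"
  unfolding bilin_def lin_def double_bracket_def psc_def
  by (simp add: g.bracket_simps d.bracket_simps g.fsc_left g.fsc_right d.fsc_left d.fsc_right
      g.coad_fsc_left g.coad_fsc_right d.coad_fsc_left d.coad_fsc_right fsc_add fsc_diff)

lemma double_bracket_self: "double_bracket brg brd u u = 0"
  by (simp add: double_bracket_def g.alternating d.alternating prod_eq_iff)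

lemma double_bracket_g: "double_bracket brg brd (x, 0) (y, 0) = (brg x y, 0)"
  by (simp add: double_bracket_def g.bracket_simps d.bracket_simps)

lemma double_bracket_d: "double_bracket brg brd (0, \<xi>) (0, \<eta>) = (0, brd \<xi> \<eta>)"
  by (simp add: double_bracket_def g.bracket_simps d.bracket_simps)

lemma jacobiator_double_ggg:
  "jacobiator (double_bracket brg brd) (x, 0) (y, 0) (z, 0) = (jacobiator brg x y z, 0)"
  by (simp add: jacobiator_def double_bracket_g)

lemma jacobiator_double_ddd:
  "jacobiator (double_bracket brg brd) (0, \<xi>) (0, \<eta>) (0, \<zeta>) = (0, jacobiator brd \<xi> \<eta> \<zeta>)"
  by (simp add: jacobiator_def double_bracket_d)

lemma jacobiator_double_ggd:
  "jacobiator (double_bracket brg brd) (x, 0) (y, 0) (0, \<xi>) =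
    (coad brd \<xi> (brg x y) - (brg (coad brd \<xi> x) y + brg x (coad brd \<xi> y)
       + coad brd (coad brg y \<xi>) x - coad brd (coad brg x \<xi>) y), 0)"
  unfolding jacobiator_def double_bracket_def using g.antisym[of y "coad brd \<xi> x"]
  by (simp add: g.bracket_simps d.bracket_simps g.coad_bracket algebra_simps)

lemma jacobiator_double_gdd:
  "jacobiator (double_bracket brg brd) (x, 0) (0, \<xi>) (0, \<eta>) =
    (0, coad brg x (brd \<xi> \<eta>) - (brd (coad brg x \<xi>) \<eta> + brd \<xi> (coad brg x \<eta>)
       + coad brg (coad brd \<eta> x) \<xi> - coad brg (coad brd \<xi> x) \<eta>))"
  unfolding jacobiator_def double_bracket_def using d.antisym[of \<eta> "coad brg x \<xi>"]
  by (simp add: g.bracket_simps d.bracket_simps d.coad_bracket algebra_simps)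

lemma lie_algebra_double_bracket_iff:
  "lie_algebra psc (double_bracket brg brd) \<longleftrightarrow> matched_pair fsc brg fsc brd (coad brg) (coad brd)"
proof -
  have "lie_algebra psc (double_bracket brg brd) \<longleftrightarrow>
      (\<forall>x y \<xi>. jacobiator (double_bracket brg brd) (x, 0) (y, 0) (0, \<xi>) = 0) \<and>
      (\<forall>x \<xi> \<eta>. jacobiator (double_bracket brg brd) (x, 0) (0, \<xi>) (0, \<eta>) = 0)"
    (is "_ \<longleftrightarrow> ?mixed")
  proof
    assume "lie_algebra psc (double_bracket brg brd)"
    then show ?mixed by (simp add: lie_algebra_iff_jacobiator)
  next
    assume mixed: ?mixed
    have "jacobiator (double_bracket brg brd) u v w = 0" for u v w
    proof (rule jacobiator_eq_0_on_product)
      show "double_bracket brg brd (u + v) w = double_bracket brg brd u w + double_bracket brg brd v w"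
        and "double_bracket brg brd u (v + w) = double_bracket brg brd u v + double_bracket brg brd u w"
        for u v w
        by (simp_all add: bilin_add_left[OF bilin_double_bracket] bilin_add_right[OF bilin_double_bracket])
    qed (simp_all add: mixed jacobiator_double_ggg jacobiator_double_ddd g.jacobi d.jacobi prod_eq_iff)
    then show "lie_algebra psc (double_bracket brg brd)"
      by (simp add: lie_algebra_iff_jacobiator bilin_double_bracket double_bracket_self)
  qed
  also have "\<dots> \<longleftrightarrow> matched_pair fsc brg fsc brd (coad brg) (coad brd)"
    by (simp add: matched_pair_def jacobiator_double_ggd jacobiator_double_gdd
        g.lie d.lie g.representation_coad d.representation_coad prod_eq_iff) blast
  finally show ?thesis .
qed

lemma Spair_double_bracket_invariant:
  "Spair (double_bracket brg brd u v) w + Spair v (double_bracket brg brd u w) = 0"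
  unfolding Spair_def double_bracket_def
  using g.antisym[of "fst w" "fst v"] d.antisym[of "snd w" "snd v"]
    pairing_commute[of "brd (snd u) (snd v)" "fst w"] pairing_commute[of "brd (snd u) (snd w)" "fst v"]
  by (simp add: pairing_simps g.coad_pairing d.pairing_coad algebra_simps)

context
  fixes br :: "('n \<Rightarrow> 'k) \<times> ('n \<Rightarrow> 'k) \<Rightarrow> ('n \<Rightarrow> 'k) \<times> ('n \<Rightarrow> 'k) \<Rightarrow> ('n \<Rightarrow> 'k) \<times> ('n \<Rightarrow> 'k)"
  assumes lie: "lie_algebra psc br"
    and invariant: "\<And>u v w. Spair (br u v) w + Spair v (br u w) = 0"
    and br_g: "\<And>x y. br (x, 0) (y, 0) = (brg x y, 0)"
    and br_d: "\<And>\<xi> \<eta>. br (0, \<xi>) (0, \<eta>) = (0, brd \<xi> \<eta>)"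
begin

lemma invariant_bracket_gd: "br (x, 0) (0, \<xi>) = (- coad brd \<xi> x, coad brg x \<xi>)"
proof -
  have "pairing (snd (br (x, 0) (0, \<xi>))) y = pairing (coad brg x \<xi>) y" for y
    using invariant[of "(x, 0)" "(0, \<xi>)" "(y, 0)"]
    by (simp add: Spair_def br_g pairing_simps g.coad_pairing eq_neg_iff_add_eq_0)
  moreover have "pairing (fst (br (0, \<xi>) (x, 0))) \<eta> = pairing (coad brd \<xi> x) \<eta>" for \<eta>
    using invariant[of "(0, \<xi>)" "(x, 0)" "(0, \<eta>)"]
    by (simp add: Spair_def br_d pairing_simps d.coad_pairing eq_neg_iff_add_eq_0)
      (metis pairing_commute)
  ultimately show ?thesis
    using lie_algebra_antisym[OF lie, of "(x, 0)" "(0, \<xi>)"] by (simp add: prod_eq_iff pairing_eqI)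
qed

lemma invariant_bracket_eq_double_bracket: "br = double_bracket brg brd"
proof (intro ext)
  fix u v :: "('n \<Rightarrow> 'k) \<times> ('n \<Rightarrow> 'k)"
  have bilin: "bilin psc psc br"
    using lie by (simp add: lie_algebra_def)
  have "br u v = br ((fst u, 0) + (0, snd u)) ((fst v, 0) + (0, snd v))"
    by simp
  also have "\<dots> = br (fst u, 0) (fst v, 0) + br (fst u, 0) (0, snd v)
      - br (fst v, 0) (0, snd u) + br (0, snd u) (0, snd v)"
    unfolding bilin_add_left[OF bilin] bilin_add_right[OF bilin]
    using lie_algebra_antisym[OF lie, of "(0, snd u)" "(fst v, 0)"] by (simp add: algebra_simps)
  also have "\<dots> = double_bracket brg brd u v"
    by (simp add: br_g br_d invariant_bracket_gd double_bracket_def algebra_simps)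
  finally show "br u v = double_bracket brg brd u v" .
qed

end

end

section \<open>ENL structure and Manin triples\<close>

lemma bilin_Spair: "bilin psc (\<lambda>c a. c * a) Spair"
  unfolding bilin_def lin_def Spair_def psc_def by (simp add: pairing_simps algebra_simps)

lemma Spair_commute: "Spair u v = Spair v u"
  by (simp add: Spair_def add.commute)

lemma Spair_nondegenerate:
  assumes "\<And>v. Spair u v = 0"
  shows "u = 0"
proof -
  have "pairing (snd u) x = pairing 0 x" for x
    using assms[of "(x, 0)"] by (simp add: Spair_def pairing_simps)
  moreover have "pairing (fst u) \<xi> = pairing 0 \<xi>" for \<xi>
    using assms[of "(0, \<xi>)"] by (simp add: Spair_def pairing_simps pairing_commute[of \<xi>])
  ultimately show ?thesis
    by (simp add: prod_eq_iff pairing_eqI)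
qed

lemma Spair_Ehat: "lin fsc fsc E \<Longrightarrow> Spair (Ehat E u) v = Spair u (Ehat E v)"
  by (simp add: Spair_def Ehat_def dual_map_pairing add.commute)

locale enl_pair =
  fixes brg brd :: "('n::finite \<Rightarrow> 'k::field) \<Rightarrow> ('n \<Rightarrow> 'k) \<Rightarrow> ('n \<Rightarrow> 'k)"
    and E :: "('n \<Rightarrow> 'k) \<Rightarrow> ('n \<Rightarrow> 'k)"
  assumes enl_g: "enl_algebra fsc brg E"
    and enl_d: "enl_algebra fsc brd (dual_map E)"

sublocale enl_pair \<subseteq> lie_pair
  using enl_g enl_d by unfold_locales (simp_all add: enl_algebra_def)

context enl_pair
begin

lemma lin_E: "lin fsc fsc E"
  using enl_g by (simp add: enl_algebra_def)

lemma lin_dual_map: "lin fsc fsc (dual_map E)"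
  using enl_d by (simp add: enl_algebra_def)

lemma pairing_dual_map: "pairing (dual_map E \<xi>) x = pairing \<xi> (E x)"
  by (rule dual_map_pairing[OF lin_E])

lemma pairing_E: "pairing (E x) \<xi> = pairing x (dual_map E \<xi>)"
  by (metis pairing_commute pairing_dual_map)

lemmas coad_g_enl = g.coad_enl[OF enl_g pairing_dual_map]
  and coad_d_enl = d.coad_enl[OF enl_d pairing_E]

lemma matched_pair_enl_iff:
  "matched_pair_enl fsc brg E fsc brd (dual_map E) (coad brg) (coad brd)
    \<longleftrightarrow> matched_pair fsc brg fsc brd (coad brg) (coad brd)"
  using enl_g enl_d coad_g_enl coad_d_enl by (simp add: matched_pair_enl_def)

lemma enl_double_bracket:
  assumes "lie_algebra psc (double_bracket brg brd)"
  shows "enl_algebra psc (double_bracket brg brd) (Ehat E)"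
proof -
  have "lin psc psc (Ehat E)"
    unfolding lin_def Ehat_def psc_def
    by (simp add: lin_add[OF lin_E] lin_add[OF lin_dual_map] lin_scale[OF lin_E] lin_scale[OF lin_dual_map])
  moreover have "Ehat E (double_bracket brg brd u v) = double_bracket brg brd u (Ehat E v)" for u v
    using enl_g enl_d coad_g_enl coad_d_enl
    by (simp add: Ehat_def double_bracket_def enl_algebra_def lin_add[OF lin_E] lin_add[OF lin_dual_map]
        lin_diff[OF lin_E] lin_diff[OF lin_dual_map])
  ultimately show ?thesis
    using assms by (simp add: enl_algebra_def)
qed

lemma manin_triple_double_bracket:
  assumes "lie_algebra psc (double_bracket brg brd)"
  shows "manin_triple_enl psc (double_bracket brg brd) (Ehat E) Spair fsc brg E fsc brd (dual_map E)
    (\<lambda>x. (x, 0)) (\<lambda>\<xi>. (0, \<xi>))"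
proof -
  have "quadratic_enl psc (double_bracket brg brd) (Ehat E) Spair"
    unfolding quadratic_enl_def
    using enl_double_bracket[OF assms] bilin_Spair Spair_commute Spair_nondegenerate
      Spair_double_bracket_invariant Spair_Ehat[OF lin_E] by blast
  moreover have "lin fsc psc (\<lambda>x. (x, 0))" and "lin fsc psc (\<lambda>\<xi>. (0, \<xi>))"
    by (simp_all add: lin_def psc_def fsc_def zero_fun_def)
  moreover have "\<exists>!p. w = (fst p, 0) + (0, snd p)" for w :: "('n \<Rightarrow> 'k) \<times> ('n \<Rightarrow> 'k)"
    by (rule ex1I[of _ w]) (auto simp: prod_eq_iff)
  ultimately show ?thesis
    unfolding manin_triple_enl_def
    using enl_g enl_d double_bracket_g double_bracket_d lin_zero[OF lin_E] lin_zero[OF lin_dual_map]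
    by (simp add: inj_on_def Ehat_def Spair_def pairing_simps)
qed

end

theorem theorem2p9:
  fixes brg brd :: "('n::finite \<Rightarrow> 'k::field_char_0) \<Rightarrow> ('n \<Rightarrow> 'k) \<Rightarrow> ('n \<Rightarrow> 'k)"
    and E :: "('n \<Rightarrow> 'k) \<Rightarrow> ('n \<Rightarrow> 'k)"
  assumes "alg_closed TYPE('k)"
    and "enl_algebra fsc brg E"
    and "enl_algebra fsc brd (dual_map E)"
  shows "matched_pair_enl fsc brg E fsc brd (dual_map E) (coad brg) (coad brd)
     \<longleftrightarrow> (\<exists>B. manin_triple_enl psc B (Ehat E) Spair fsc brg E fsc brd (dual_map E)
              (\<lambda>x. (x, 0)) (\<lambda>xi. (0, xi)))"
proof -
  interpret enl_pair brg brd E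
    using assms(2,3) by unfold_locales
  have "matched_pair_enl fsc brg E fsc brd (dual_map E) (coad brg) (coad brd)
      \<longleftrightarrow> lie_algebra psc (double_bracket brg brd)"
    by (simp add: matched_pair_enl_iff lie_algebra_double_bracket_iff)
  also have "\<dots> \<longleftrightarrow> (\<exists>B. manin_triple_enl psc B (Ehat E) Spair fsc brg E fsc brd (dual_map E)
      (\<lambda>x. (x, 0)) (\<lambda>xi. (0, xi)))"
  proof
    assume "lie_algebra psc (double_bracket brg brd)"
    then show "\<exists>B. manin_triple_enl psc B (Ehat E) Spair fsc brg E fsc brd (dual_map E)
        (\<lambda>x. (x, 0)) (\<lambda>xi. (0, xi))"
      by (blast intro: manin_triple_double_bracket)
  next
    assume "\<exists>B. manin_triple_enl psc B (Ehat E) Spair fsc brg E fsc brd (dual_map E)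
      (\<lambda>x. (x, 0)) (\<lambda>xi. (0, xi))"
    then obtain B where lie: "lie_algebra psc B"
      and "\<And>u v w. Spair (B u v) w + Spair v (B u w) = 0"
      and "\<And>x y. B (x, 0) (y, 0) = (brg x y, 0)" and "\<And>\<xi> \<eta>. B (0, \<xi>) (0, \<eta>) = (0, brd \<xi> \<eta>)"
      by (auto simp: manin_triple_enl_def quadratic_enl_def enl_algebra_def)
    then have "B = double_bracket brg brd"
      by (rule invariant_bracket_eq_double_bracket)
    with lie show "lie_algebra psc (double_bracket brg brd)"
      by simp
  qed
  finally show ?thesis .
qed

end
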